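(* Let $x\in U$ and let $F_1,F_2\subset T_xM$ be subspaces of dimension $d$ contained in $C(x)$. There exists $\kappa\in(0,1)$ such that for every $n\ge1$, $$\theta_{f^i(x)}(Df^i(x)F_1,Df^i(x)F_2)\le\kappa^i\,\theta_x(F_1,F_2)\quad\text{for every }1\le i\le n.$$
   Context: Setting: $M$ compact Riemannian manifold, $f:M\to M$ a $C^{1+\alpha}$ non-singular endomorphism, $U$ open with $f(\overline U)\subset U$, continuous splitting $T_UM=E^s\oplus F$, constant $0<\lambda<1$, with $Df(x)E^s_x=E^s_{f(x)}$, $\|Df^n(x)|_{E^s_x}\|\le\lambda^n$, a cone field $x\mapsto C(x)$ on $U$ of constant dimension $d=\dim F$ with $Df(x)C(x)\subseteq C(f(x))$, and the domination $\|Df(x)v\|\|Df(x)^{-1}w\|\le\lambda\|v\|\|w\|$ for $v\in E^s_x$, $w\in Df(x)C(x)$, $x\in U$. For $d$-dimensional subspaces $F_1,F_2\subset C(x)$ there are unique linear maps $L_{F_2}:F_1\to E^s_x$ and $L_{F_1}:F_2\to E^s_x$ with $F_2=\{v+L_{F_2}v: v\in F_1\}$ and $F_1=\{v+L_{F_1}v:v\in F_2\}$; define $\theta_x(F_1,F_2)=\max\{\|L_{F_1}\|,\|L_{F_2}\|\}$. *)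

theory Defs
  imports "HOL-Analysis.Analysis"
begin

text \<open>The compact Riemannian manifold M is modelled as a compact embedded C^1
submanifold of a Euclidean space 'a (Nash embedding), with the induced metric.\<close>

definition C1_map_on :: "'a::euclidean_space set \<Rightarrow> ('a \<Rightarrow> 'b::euclidean_space) \<Rightarrow> ('a \<Rightarrow> 'a \<Rightarrow> 'b) \<Rightarrow> bool" where
  "C1_map_on N g g' \<longleftrightarrow> open N \<and>
     (\<forall>y\<in>N. (g has_derivative g' y) (at y)) \<and>
     (\<forall>y\<in>N. \<forall>e>0. \<exists>\<delta>>0. \<forall>z\<in>N. dist z y < \<delta> \<longrightarrow> onorm (\<lambda>v. g' z v - g' y v) < e)"

definition C1_submanifold :: "'a::euclidean_space set \<Rightarrow> nat \<Rightarrow> bool" where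
  "C1_submanifold M k \<longleftrightarrow>
     (\<forall>p\<in>M. \<exists>V W (\<phi>::'a\<Rightarrow>'a) \<psi> \<phi>' \<psi>' S. open V \<and> p \<in> V \<and> open W \<and>
        homeomorphism V W \<phi> \<psi> \<and> C1_map_on V \<phi> \<phi>' \<and> C1_map_on W \<psi> \<psi>' \<and>
        subspace S \<and> dim S = k \<and> \<phi> ` (M \<inter> V) = W \<inter> S)"

definition tangent_space :: "'a::euclidean_space set \<Rightarrow> 'a \<Rightarrow> 'a set" where
  "tangent_space M x = {v. \<exists>\<gamma>::real \<Rightarrow> 'a. \<gamma> 0 = x \<and> (\<gamma> has_vector_derivative v) (at 0) \<and>
                          (\<exists>e>0. \<forall>t. \<bar>t\<bar> < e \<longrightarrow> \<gamma> t \<in> M)}"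

fun iter_deriv :: "('a \<Rightarrow> 'a) \<Rightarrow> ('a \<Rightarrow> 'a \<Rightarrow> 'a) \<Rightarrow> nat \<Rightarrow> 'a \<Rightarrow> 'a \<Rightarrow> 'a" where
  "iter_deriv f f' 0 x = id"
| "iter_deriv f f' (Suc n) x = f' ((f ^^ n) x) \<circ> iter_deriv f f' n x"

text \<open>Continuity of a field of subspaces (Grassmannian topology, via unit vectors).\<close>
definition continuous_subspace_field :: "'a::euclidean_space set \<Rightarrow> ('a \<Rightarrow> 'a set) \<Rightarrow> bool" where
  "continuous_subspace_field U E \<longleftrightarrow>
     (\<forall>x\<in>U. \<forall>e>0. \<exists>\<delta>>0. \<forall>y\<in>U. dist y x < \<delta> \<longrightarrow>
        (\<forall>v\<in>E x. norm v = 1 \<longrightarrow> (\<exists>w\<in>E y. dist v w < e)) \<and>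
        (\<forall>w\<in>E y. norm w = 1 \<longrightarrow> (\<exists>v\<in>E x. dist v w < e)))"

definition cone_of_dim :: "'a::euclidean_space set \<Rightarrow> nat \<Rightarrow> bool" where
  "cone_of_dim C d \<longleftrightarrow> closed C \<and> (\<forall>v\<in>C. \<forall>t::real. t *\<^sub>R v \<in> C) \<and>
     (\<exists>S. subspace S \<and> dim S = d \<and> S \<subseteq> C) \<and>
     (\<forall>S. subspace S \<and> S \<subseteq> C \<longrightarrow> dim S \<le> d)"

definition graph_map :: "'a::euclidean_space set \<Rightarrow> 'a set \<Rightarrow> 'a set \<Rightarrow> 'a \<Rightarrow> 'a" where
  "graph_map E F1 F2 = (THE L. (\<forall>v\<in>F1. L v \<in> E) \<and>
      (\<forall>u\<in>F1. \<forall>v\<in>F1. L (u + v) = L u + L v) \<and>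
      (\<forall>c::real. \<forall>v\<in>F1. L (c *\<^sub>R v) = c *\<^sub>R L v) \<and>
      F2 = {v + L v | v. v \<in> F1} \<and> (\<forall>v. v \<notin> F1 \<longrightarrow> L v = 0))"

definition op_norm_on :: "'a::euclidean_space set \<Rightarrow> ('a \<Rightarrow> 'a) \<Rightarrow> real" where
  "op_norm_on S L = Sup {norm (L v) | v. v \<in> S \<and> norm v \<le> 1}"

text \<open>theta_x(F1,F2) = max(||L_{F1}||, ||L_{F2}||) where E = E^s_x.\<close>
definition theta :: "'a::euclidean_space set \<Rightarrow> 'a set \<Rightarrow> 'a set \<Rightarrow> real" where
  "theta E F1 F2 = max (op_norm_on F2 (graph_map E F2 F1)) (op_norm_on F1 (graph_map E F1 F2))"

end

theory Submission
  imports Defs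
begin

(* Two subspaces of the cone C(y) are transverse to E^s(y), so each is the graph of a linear map
   into E^s(y) over the other, and theta is the larger of the two operator norms. A = Df(y) maps
   the graph of L over G onto the graph of A L A^-1 over A G, and domination applied to L v in E^s
   and v in the cone gives |A L v| |v| <= lam |L v| |A v|, so A L A^-1 has operator norm at most
   lam times that of L. Hence theta contracts by lam along the orbit and kappa = lam works. *)

definition is_graph_map :: "'a::euclidean_space set \<Rightarrow> 'a set \<Rightarrow> 'a set \<Rightarrow> ('a \<Rightarrow> 'a) \<Rightarrow> bool" where
  "is_graph_map E F1 F2 L \<longleftrightarrow> (\<forall>v\<in>F1. L v \<in> E) \<and>
      (\<forall>u\<in>F1. \<forall>v\<in>F1. L (u + v) = L u + L v) \<and>
      (\<forall>c::real. \<forall>v\<in>F1. L (c *\<^sub>R v) = c *\<^sub>R L v) \<and>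
      F2 = {v + L v | v. v \<in> F1} \<and> (\<forall>v. v \<notin> F1 \<longrightarrow> L v = 0)"

lemma graph_map_eq_The: "graph_map E F1 F2 = (THE L. is_graph_map E F1 F2 L)"
  unfolding graph_map_def is_graph_map_def ..

lemma is_graph_map_unique:
  assumes E: "subspace E" and F1: "subspace F1" and I: "F1 \<inter> E \<subseteq> {0}"
    and L: "is_graph_map E F1 F2 L" and L': "is_graph_map E F1 F2 L'"
  shows "L' = L"
proof
  fix v show "L' v = L v"
  proof (cases "v \<in> F1")
    case True
    have "v + L' v \<in> F2" using L' True unfolding is_graph_map_def by blast
    then obtain u where u: "u \<in> F1" "v + L' v = u + L u"
      using L unfolding is_graph_map_def by blast
    have "v - u = L u - L' v" using u(2) by (simp add: algebra_simps)
    moreover have "v - u \<in> F1" using F1 True u(1) subspace_diff by blast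
    moreover have "L u - L' v \<in> E"
      using L L' u(1) True E subspace_diff unfolding is_graph_map_def by metis
    ultimately have "v = u" using I by auto
    then show ?thesis using u(2) by simp
  next
    case False
    then show ?thesis using L L' unfolding is_graph_map_def by simp
  qed
qed

lemma graph_map_eqI:
  assumes "subspace E" "subspace F1" "F1 \<inter> E \<subseteq> {0}" "is_graph_map E F1 F2 L"
  shows "graph_map E F1 F2 = L"
  unfolding graph_map_eq_The using assms is_graph_map_unique[OF assms(1-3)]
  by (blast intro: the_equality)

lemma ex_is_graph_map:
  assumes E: "subspace E" and F1: "subspace F1" and F2: "subspace F2" and I: "F2 \<inter> E \<subseteq> {0}"
    and sums: "{a + b | a b. a \<in> F1 \<and> b \<in> E} = {a + b | a b. a \<in> F2 \<and> b \<in> E}"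
  shows "\<exists>L. is_graph_map E F1 F2 L"
proof -
  have ex: "\<exists>e. e \<in> E \<and> v + e \<in> F2" if v: "v \<in> F1" for v
  proof -
    have "v + 0 \<in> {a + b | a b. a \<in> F1 \<and> b \<in> E}" using v subspace_0[OF E] by blast
    then obtain w e where "w \<in> F2" "e \<in> E" "v = w + e" using sums by auto
    then show ?thesis using subspace_neg[OF E] by (intro exI[of _ "-e"]) auto
  qed
  have unique: "e = e'" if "e \<in> E" "v + e \<in> F2" "e' \<in> E" "v + e' \<in> F2" for v e e'
  proof -
    have "(v + e) - (v + e') \<in> F2" using that F2 subspace_diff by blast
    moreover have "e - e' \<in> E" using that E subspace_diff by blast
    ultimately show ?thesis using I by auto
  qed
  define L where "L v = (if v \<in> F1 then (SOME e. e \<in> E \<and> v + e \<in> F2) else 0)" for v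
  have L: "L v \<in> E \<and> v + L v \<in> F2" if "v \<in> F1" for v
    using someI_ex[OF ex[OF that]] that unfolding L_def by simp
  have L_eqI: "L v = e" if "v \<in> F1" "e \<in> E" "v + e \<in> F2" for v e
    using unique L that by blast
  show ?thesis unfolding is_graph_map_def
  proof (intro exI[of _ L] conjI ballI allI impI)
    fix u v assume uv: "u \<in> F1" "v \<in> F1"
    have "(u + L u) + (v + L v) \<in> F2" using uv L F2 subspace_add by blast
    then show "L (u + v) = L u + L v"
      using uv L F1 E by (intro L_eqI) (auto simp: subspace_add algebra_simps)
  next
    fix c :: real and v assume v: "v \<in> F1"
    have "c *\<^sub>R (v + L v) \<in> F2" using v L F2 subspace_scale by blast
    then show "L (c *\<^sub>R v) = c *\<^sub>R L v"
      using v L F1 E by (intro L_eqI) (auto simp: subspace_scale algebra_simps)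
  next
    have "w \<in> {v + L v |v. v \<in> F1}" if w: "w \<in> F2" for w
    proof -
      have "w + 0 \<in> {a + b | a b. a \<in> F2 \<and> b \<in> E}" using w subspace_0[OF E] by blast
      then have "w \<in> {a + b | a b. a \<in> F1 \<and> b \<in> E}" using sums by simp
      then obtain a b where "a \<in> F1" "b \<in> E" "w = a + b" by blast
      then show ?thesis using L_eqI w by blast
    qed
    then show "F2 = {v + L v |v. v \<in> F1}" using L by blast
  qed (use L in \<open>auto simp: L_def\<close>)
qed

lemma dim_sums_direct:
  fixes E F :: "'a::euclidean_space set"
  assumes "subspace E" "subspace F" "E \<inter> F \<subseteq> {0}"
  shows "dim {a + b | a b. a \<in> E \<and> b \<in> F} = dim E + dim F"
proof -
  have "E \<inter> F = {0}" using assms subspace_0 by blast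
  then show ?thesis using dim_sums_Int[OF assms(1,2)] by (simp add: dim_insert span_zero)
qed

lemma sums_eq_of_dim_eq:
  fixes T E F :: "'a::euclidean_space set"
  assumes T: "subspace T" and E: "subspace E" and F: "subspace F"
    and "E \<subseteq> T" "F \<subseteq> T" "F \<inter> E \<subseteq> {0}" and dim: "dim F + dim E = dim T"
  shows "{a + b | a b. a \<in> F \<and> b \<in> E} = T"
proof -
  let ?S = "{a + b | a b. a \<in> F \<and> b \<in> E}"
  have "?S \<subseteq> T" using assms subspace_add[OF T] by blast
  moreover have "dim ?S = dim T" using dim_sums_direct[OF F E] assms by simp
  ultimately have "span ?S = span T" by (intro dim_eq_span) simp_all
  moreover have "span ?S = ?S" using subspace_sums[OF F E] by (rule span_eq_iff[THEN iffD2])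
  moreover have "span T = T" using T by (rule span_eq_iff[THEN iffD2])
  ultimately show ?thesis by simp
qed

lemma is_graph_map_linear_extension:
  assumes F1: "subspace F1" and L: "is_graph_map E F1 F2 L"
  obtains g where "linear g" "\<forall>v\<in>F1. L v = g v"
proof -
  have add: "\<forall>u\<in>F1. \<forall>v\<in>F1. L (u + v) = L u + L v"
    and scale: "\<forall>c::real. \<forall>v\<in>F1. L (c *\<^sub>R v) = c *\<^sub>R L v"
    using L unfolding is_graph_map_def by blast+
  obtain B where B: "B \<subseteq> F1" "independent B" "F1 \<subseteq> span B"
    by (metis basis_exists)
  obtain g where g: "linear g" "\<forall>b\<in>B. g b = L b"
    using linear_independent_extend[OF B(2), of L] by blast
  have "L 0 = 0" using scale subspace_0[OF F1] by (metis scale_zero_left)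
  have "subspace {v \<in> F1. L v = g v}"
    unfolding subspace_def
  proof (intro conjI ballI allI)
    fix u v assume "u \<in> {v \<in> F1. L v = g v}" "v \<in> {v \<in> F1. L v = g v}"
    then show "u + v \<in> {v \<in> F1. L v = g v}"
      using F1 add linear_add[OF g(1)] by (simp add: subspace_add)
  next
    fix c :: real and v assume "v \<in> {v \<in> F1. L v = g v}"
    then show "c *\<^sub>R v \<in> {v \<in> F1. L v = g v}"
      using F1 scale linear_scale[OF g(1)] by (simp add: subspace_scale)
  qed (use F1 \<open>L 0 = 0\<close> linear_0[OF g(1)] in \<open>simp add: subspace_0\<close>)
  then have "span B \<subseteq> {v \<in> F1. L v = g v}"
    using B(1) g(2) by (intro span_minimal) auto
  then show thesis using that g(1) B(3) by blast
qed

lemma bdd_above_op_norm_on: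
  fixes L :: "'a::euclidean_space \<Rightarrow> 'a"
  assumes "linear g" "\<forall>v\<in>S. L v = g v"
  shows "bdd_above {norm (L v) | v. v \<in> S \<and> norm v \<le> 1}"
proof (rule bdd_aboveI, clarify)
  fix v assume "v \<in> S" "norm v \<le> 1"
  then show "norm (L v) \<le> onorm g"
    using assms onorm[of g v] onorm_pos_le[of g]
    by (auto simp: linear_conv_bounded_linear intro: order.trans mult_left_le)
qed

lemma norm_le_op_norm_on:
  fixes L :: "'a::euclidean_space \<Rightarrow> 'a"
  assumes g: "linear g" "\<forall>v\<in>S. L v = g v" and S: "subspace S" and v: "v \<in> S"
  shows "norm (L v) \<le> op_norm_on S L * norm v"
proof (cases "v = 0")
  case True
  then show ?thesis using g v by (simp add: linear_0)
next
  case False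
  let ?u = "v /\<^sub>R norm v"
  have "?u \<in> S" "norm ?u \<le> 1" using S v False by (auto simp: subspace_scale)
  then have "norm (L ?u) \<le> op_norm_on S L"
    unfolding op_norm_on_def by (intro cSup_upper[OF _ bdd_above_op_norm_on[OF g]]) blast
  moreover have "norm (L ?u) = norm (L v) / norm v"
    using g v \<open>?u \<in> S\<close> by (simp add: linear_scale divide_inverse_commute)
  ultimately show ?thesis using False by (simp add: divide_le_eq)
qed

lemma op_norm_on_nonneg:
  fixes L :: "'a::euclidean_space \<Rightarrow> 'a"
  assumes g: "linear g" "\<forall>v\<in>S. L v = g v" and "0 \<in> S"
  shows "0 \<le> op_norm_on S L"
proof -
  have "norm (L 0) \<in> {norm (L v) | v. v \<in> S \<and> norm v \<le> 1}"
    using assms(3) by (intro CollectI exI[of _ 0]) simp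
  then have "norm (L 0) \<le> op_norm_on S L"
    unfolding op_norm_on_def by (rule cSup_upper[OF _ bdd_above_op_norm_on[OF g]])
  then show ?thesis by (rule order.trans[OF norm_ge_zero])
qed

lemma op_norm_on_le:
  assumes "0 \<in> S" "0 \<le> B" "\<forall>v\<in>S. norm (L v) \<le> B * norm v"
  shows "op_norm_on S L \<le> B"
  unfolding op_norm_on_def using assms
  by (intro cSup_least) (auto intro: order.trans mult_left_le)

definition pushforward_map :: "('a \<Rightarrow> 'b) \<Rightarrow> 'a set \<Rightarrow> ('a \<Rightarrow> 'a) \<Rightarrow> 'b \<Rightarrow> 'b::zero" where
  "pushforward_map A G L w = (if w \<in> A ` G then A (L (inv_into G A w)) else 0)"

lemma pushforward_map_apply:
  "inj_on A G \<Longrightarrow> v \<in> G \<Longrightarrow> pushforward_map A G L (A v) = A (L v)"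
  by (simp add: pushforward_map_def)

lemma is_graph_map_image:
  fixes A :: "'a::euclidean_space \<Rightarrow> 'a"
  assumes A: "linear A" "inj_on A G1" "A ` E \<subseteq> E'" and G1: "subspace G1"
    and L: "is_graph_map E G1 G2 L"
  shows "is_graph_map E' (A ` G1) (A ` G2) (pushforward_map A G1 L)"
proof -
  have LE: "\<forall>v\<in>G1. L v \<in> E"
    and add: "\<forall>u\<in>G1. \<forall>v\<in>G1. L (u + v) = L u + L v"
    and scale: "\<forall>c::real. \<forall>v\<in>G1. L (c *\<^sub>R v) = c *\<^sub>R L v"
    and G2: "G2 = {v + L v | v. v \<in> G1}"
    using L unfolding is_graph_map_def by blast+
  note push = pushforward_map_apply[OF A(2)]
  show ?thesis unfolding is_graph_map_def
  proof (intro conjI ballI allI impI)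
    fix w assume "w \<in> A ` G1"
    then show "pushforward_map A G1 L w \<in> E'" using LE A(3) by (auto simp: push)
  next
    fix w w' assume "w \<in> A ` G1" "w' \<in> A ` G1"
    then obtain u v where "u \<in> G1" "v \<in> G1" "w = A u" "w' = A v" by blast
    then show "pushforward_map A G1 L (w + w') = pushforward_map A G1 L w + pushforward_map A G1 L w'"
      using A(1) add G1 by (simp add: push subspace_add linear_add[symmetric])
  next
    fix c :: real and w assume "w \<in> A ` G1"
    then obtain v where "v \<in> G1" "w = A v" by blast
    then show "pushforward_map A G1 L (c *\<^sub>R w) = c *\<^sub>R pushforward_map A G1 L w"
      using A(1) scale G1 by (simp add: push subspace_scale linear_scale[symmetric])
  next
    have "A ` G2 = (\<lambda>v. A v + A (L v)) ` G1"
      unfolding G2 Setcompr_eq_image by (simp add: image_image linear_add[OF A(1)])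
    also have "\<dots> = (\<lambda>w. w + pushforward_map A G1 L w) ` A ` G1"
      unfolding image_image using push by simp
    finally show "A ` G2 = {w + pushforward_map A G1 L w |w. w \<in> A ` G1}"
      by (simp only: Setcompr_eq_image)
  next
    fix w assume "w \<notin> A ` G1"
    then show "pushforward_map A G1 L w = 0" by (simp add: pushforward_map_def)
  qed
qed

lemma op_norm_on_pushforward_map_le:
  fixes A :: "'a::euclidean_space \<Rightarrow> 'a"
  assumes A: "linear A" "inj_on A G" and G: "subspace G" and L: "is_graph_map E G G' L"
    and dom: "\<forall>v\<in>E. \<forall>u\<in>G. norm (A v) * norm u \<le> lam * norm v * norm (A u)"
    and lam: "0 \<le> lam"
  shows "op_norm_on (A ` G) (pushforward_map A G L) \<le> lam * op_norm_on G L"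
proof (rule op_norm_on_le)
  obtain g where g: "linear g" "\<forall>v\<in>G. L v = g v"
    using is_graph_map_linear_extension[OF G L] by blast
  have norm_L: "0 \<le> op_norm_on G L"
    using op_norm_on_nonneg[OF g] subspace_0[OF G] by blast
  then show "0 \<le> lam * op_norm_on G L" using lam by simp
  show "0 \<in> A ` G" using A(1) subspace_0[OF G] linear_0 by (metis image_eqI)
  show "\<forall>w\<in>A ` G. norm (pushforward_map A G L w) \<le> lam * op_norm_on G L * norm w"
  proof
    fix w assume "w \<in> A ` G"
    then obtain v where v: "v \<in> G" "w = A v" by blast
    have "L v \<in> E" using L v(1) unfolding is_graph_map_def by blast
    then have "norm (A (L v)) * norm v \<le> lam * norm (L v) * norm (A v)"
      using dom v(1) by blast
    also have "\<dots> \<le> lam * (op_norm_on G L * norm v) * norm (A v)"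
      using norm_le_op_norm_on[OF g G v(1)] lam by (intro mult_right_mono mult_left_mono) auto
    finally have "norm (A (L v)) * norm v \<le> (lam * op_norm_on G L * norm (A v)) * norm v"
      by (simp add: ac_simps)
    moreover have "L 0 = 0" using g subspace_0[OF G] linear_0[OF g(1)] by simp
    ultimately have "norm (A (L v)) \<le> lam * op_norm_on G L * norm (A v)"
      using norm_L lam linear_0[OF A(1)] by (cases "v = 0") simp_all
    then show "norm (pushforward_map A G L w) \<le> lam * op_norm_on G L * norm w"
      using v by (simp add: pushforward_map_apply[OF A(2)])
  qed
qed

lemma subset_sums_left:
  assumes "subspace F"
  shows "E \<subseteq> {a + b | a b. a \<in> E \<and> b \<in> F}"
proof
  fix v assume "v \<in> E"
  then show "v \<in> {a + b | a b. a \<in> E \<and> b \<in> F}"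
    using subspace_0[OF assms] by (intro CollectI exI[of _ v] exI[of _ 0]) simp
qed

lemma iter_deriv_Suc_image:
  "iter_deriv f f' (Suc n) x ` G = f' ((f ^^ n) x) ` iter_deriv f f' n x ` G"
  by (simp add: image_comp)

locale dominated_cone_field =
  fixes U :: "'a::euclidean_space set" and f :: "'a \<Rightarrow> 'a" and f' :: "'a \<Rightarrow> 'a \<Rightarrow> 'a"
    and Es C :: "'a \<Rightarrow> 'a set" and lam :: real
  assumes maps_into: "\<And>y. y \<in> U \<Longrightarrow> f y \<in> U"
    and linear_deriv: "\<And>y. y \<in> U \<Longrightarrow> linear (f' y)"
    and deriv_nonzero_on_cone: "\<And>y u. y \<in> U \<Longrightarrow> u \<in> C y \<Longrightarrow> f' y u = 0 \<Longrightarrow> u = 0"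
    and subspace_Es: "\<And>y. y \<in> U \<Longrightarrow> subspace (Es y)"
    and deriv_Es: "\<And>y. y \<in> U \<Longrightarrow> f' y ` Es y \<subseteq> Es (f y)"
    and deriv_cone: "\<And>y. y \<in> U \<Longrightarrow> f' y ` C y \<subseteq> C (f y)"
    and dominated: "\<And>y v u. y \<in> U \<Longrightarrow> v \<in> Es y \<Longrightarrow> u \<in> C y \<Longrightarrow>
      norm (f' y v) * norm u \<le> lam * norm v * norm (f' y u)"
    and lam_nonneg: "0 \<le> lam" and lam_less_one: "lam < 1"
begin

lemma Es_inter_cone: "y \<in> U \<Longrightarrow> Es y \<inter> C y \<subseteq> {0}"
proof
  fix v assume y: "y \<in> U" and v: "v \<in> Es y \<inter> C y"
  let ?X = "norm (f' y v) * norm v"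
  have "?X \<le> lam * ?X" using dominated[OF y, of v v] v by (simp add: ac_simps)
  then have "(1 - lam) * ?X \<le> 0" by (simp add: algebra_simps)
  then have "?X \<le> 0" using lam_less_one by (simp add: mult_le_0_iff)
  then have "?X = 0" using mult_nonneg_nonneg[OF norm_ge_zero norm_ge_zero, of "f' y v" v] by linarith
  then have "f' y v = 0 \<or> v = 0" by (simp only: mult_eq_0_iff norm_eq_zero)
  then show "v \<in> {0}" using deriv_nonzero_on_cone[OF y, of v] v by blast
qed

lemma inj_on_deriv: "y \<in> U \<Longrightarrow> subspace G \<Longrightarrow> G \<subseteq> C y \<Longrightarrow> inj_on (f' y) G"
  using linear_inj_on_iff_eq_0[OF linear_deriv] deriv_nonzero_on_cone by blast

lemma graph_map_in_cone_eq:
  "y \<in> U \<Longrightarrow> subspace G \<Longrightarrow> G \<subseteq> C y \<Longrightarrow> is_graph_map (Es y) G G' L \<Longrightarrow> graph_map (Es y) G G' = L"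
  using graph_map_eqI subspace_Es Es_inter_cone by blast

definition graph_pair :: "'a \<Rightarrow> 'a set \<Rightarrow> 'a set \<Rightarrow> bool" where
  "graph_pair y G1 G2 \<longleftrightarrow> subspace G1 \<and> subspace G2 \<and> G1 \<subseteq> C y \<and> G2 \<subseteq> C y \<and>
     (\<exists>L. is_graph_map (Es y) G1 G2 L) \<and> (\<exists>L. is_graph_map (Es y) G2 G1 L)"

lemma graph_pair_of_complement:
  assumes x: "x \<in> U" and Fc: "subspace Fc" "Es x \<inter> Fc \<subseteq> {0}"
    and C: "C x \<subseteq> {a + b | a b. a \<in> Es x \<and> b \<in> Fc}"
    and F: "subspace F1" "subspace F2" "F1 \<subseteq> C x" "F2 \<subseteq> C x"
      "dim F1 = dim Fc" "dim F2 = dim Fc"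
  shows "graph_pair x F1 F2"
proof -
  note E = subspace_Es[OF x]
  let ?T = "{a + b | a b. a \<in> Es x \<and> b \<in> Fc}"
  have T: "subspace ?T" "Es x \<subseteq> ?T" "dim ?T = dim Fc + dim (Es x)"
    using subspace_sums[OF E Fc(1)] subset_sums_left[OF Fc(1)] dim_sums_direct[OF E Fc] by simp_all
  have I: "F1 \<inter> Es x \<subseteq> {0}" "F2 \<inter> Es x \<subseteq> {0}" using F Es_inter_cone[OF x] by auto
  have "{a + b | a b. a \<in> F1 \<and> b \<in> Es x} = ?T"
    using F C T(3) by (intro sums_eq_of_dim_eq[OF T(1) E F(1) T(2) _ I(1)]) auto
  moreover have "{a + b | a b. a \<in> F2 \<and> b \<in> Es x} = ?T"
    using F C T(3) by (intro sums_eq_of_dim_eq[OF T(1) E F(2) T(2) _ I(2)]) auto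
  ultimately have sums: "{a + b | a b. a \<in> F1 \<and> b \<in> Es x} = {a + b | a b. a \<in> F2 \<and> b \<in> Es x}"
    by simp
  show ?thesis
    unfolding graph_pair_def
    using F ex_is_graph_map[OF E F(1,2) I(2) sums] ex_is_graph_map[OF E F(2,1) I(1) sums[symmetric]]
    by blast
qed

lemma graph_pair_image:
  assumes y: "y \<in> U" and G: "graph_pair y G1 G2"
  shows "graph_pair (f y) (f' y ` G1) (f' y ` G2)"
proof -
  note A = linear_deriv[OF y] deriv_Es[OF y]
  obtain L12 L21 where L12: "is_graph_map (Es y) G1 G2 L12" and L21: "is_graph_map (Es y) G2 G1 L21"
    and sub: "subspace G1" "subspace G2" and cone: "G1 \<subseteq> C y" "G2 \<subseteq> C y"
    using G unfolding graph_pair_def by blast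
  have inj: "inj_on (f' y) G1" "inj_on (f' y) G2" using inj_on_deriv[OF y] sub cone by blast+
  show ?thesis
    unfolding graph_pair_def
    using linear_subspace_image[OF A(1) sub(1)] linear_subspace_image[OF A(1) sub(2)]
      cone deriv_cone[OF y] is_graph_map_image[OF A(1) inj(1) A(2) sub(1) L12]
      is_graph_map_image[OF A(1) inj(2) A(2) sub(2) L21]
    by blast
qed

lemma theta_image_le:
  assumes y: "y \<in> U" and G: "graph_pair y G1 G2"
  shows "theta (Es (f y)) (f' y ` G1) (f' y ` G2) \<le> lam * theta (Es y) G1 G2"
proof -
  let ?A = "f' y"
  note A = linear_deriv[OF y] deriv_Es[OF y]
  obtain L12 L21 where L12: "is_graph_map (Es y) G1 G2 L12" and L21: "is_graph_map (Es y) G2 G1 L21"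
    and sub: "subspace G1" "subspace G2" and cone: "G1 \<subseteq> C y" "G2 \<subseteq> C y"
    using G unfolding graph_pair_def by blast
  have inj: "inj_on ?A G1" "inj_on ?A G2" using inj_on_deriv[OF y] sub cone by blast+
  have dom: "\<forall>v\<in>Es y. \<forall>u\<in>G1. norm (?A v) * norm u \<le> lam * norm v * norm (?A u)"
    "\<forall>v\<in>Es y. \<forall>u\<in>G2. norm (?A v) * norm u \<le> lam * norm v * norm (?A u)"
    using dominated[OF y] cone by blast+
  have image_cone: "?A ` G1 \<subseteq> C (f y)" "?A ` G2 \<subseteq> C (f y)" using deriv_cone[OF y] cone by blast+
  note graph_map_image = graph_map_in_cone_eq[OF maps_into[OF y] linear_subspace_image[OF A(1)]]
  have "theta (Es (f y)) (?A ` G1) (?A ` G2)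
      = max (op_norm_on (?A ` G2) (pushforward_map ?A G2 L21))
          (op_norm_on (?A ` G1) (pushforward_map ?A G1 L12))"
    unfolding theta_def
    using graph_map_image[OF sub(1) image_cone(1) is_graph_map_image[OF A(1) inj(1) A(2) sub(1) L12]]
      graph_map_image[OF sub(2) image_cone(2) is_graph_map_image[OF A(1) inj(2) A(2) sub(2) L21]]
    by simp
  also have "\<dots> \<le> max (lam * op_norm_on G2 L21) (lam * op_norm_on G1 L12)"
    using op_norm_on_pushforward_map_le[OF A(1) inj(1) sub(1) L12 dom(1) lam_nonneg]
      op_norm_on_pushforward_map_le[OF A(1) inj(2) sub(2) L21 dom(2) lam_nonneg]
    by (rule max.mono[rotated])
  also have "\<dots> = lam * theta (Es y) G1 G2"
    unfolding theta_def graph_map_in_cone_eq[OF y sub(1) cone(1) L12]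
      graph_map_in_cone_eq[OF y sub(2) cone(2) L21]
    using lam_nonneg by (simp add: max_mult_distrib_left)
  finally show ?thesis .
qed

lemma iterate_in_domain: "x \<in> U \<Longrightarrow> (f ^^ n) x \<in> U"
  by (induction n) (auto intro: maps_into)

lemma graph_pair_iter_deriv:
  assumes "x \<in> U" "graph_pair x F1 F2"
  shows "graph_pair ((f ^^ n) x) (iter_deriv f f' n x ` F1) (iter_deriv f f' n x ` F2)"
proof (induction n)
  case (Suc n)
  then show ?case
    using graph_pair_image[OF iterate_in_domain[OF assms(1)] Suc.IH]
    by (simp only: iter_deriv_Suc_image funpow.simps comp_apply)
qed (use assms in simp)

lemma theta_iter_deriv_le:
  assumes x: "x \<in> U" and F: "graph_pair x F1 F2"
  shows "theta (Es ((f ^^ n) x)) (iter_deriv f f' n x ` F1) (iter_deriv f f' n x ` F2)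
    \<le> lam ^ n * theta (Es x) F1 F2"
proof (induction n)
  case 0
  then show ?case by simp
next
  case (Suc n)
  have "theta (Es ((f ^^ Suc n) x)) (iter_deriv f f' (Suc n) x ` F1) (iter_deriv f f' (Suc n) x ` F2)
      \<le> lam * theta (Es ((f ^^ n) x)) (iter_deriv f f' n x ` F1) (iter_deriv f f' n x ` F2)"
    unfolding iter_deriv_Suc_image funpow.simps comp_def
    by (rule theta_image_le[OF iterate_in_domain[OF x] graph_pair_iter_deriv[OF x F]])
  also have "\<dots> \<le> lam * (lam ^ n * theta (Es x) F1 F2)"
    using Suc.IH lam_nonneg by (rule mult_left_mono)
  finally show ?case by (simp add: mult.assoc)
qed

end

theorem lemma4p8:
  fixes M U :: "'a::euclidean_space set"
    and f :: "'a \<Rightarrow> 'a" and f' :: "'a \<Rightarrow> 'a \<Rightarrow> 'a"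
    and N :: "'a set" and m :: nat and \<alpha> K lam :: real
    and Es Fc C :: "'a \<Rightarrow> 'a set" and d :: nat
    and x :: 'a and F1 F2 :: "'a set"
  assumes M: "compact M" "C1_submanifold M m"
    and f_C1: "C1_map_on N f f'" "M \<subseteq> N" "f ` M \<subseteq> M"
    and f_Holder: "0 < \<alpha>" "\<alpha> \<le> 1"
      "\<forall>y\<in>M. \<forall>z\<in>M. onorm (\<lambda>v. f' y v - f' z v) \<le> K * dist y z powr \<alpha>"
    and f_nonsing: "\<forall>y\<in>M. inj_on (f' y) (tangent_space M y)"
    and U: "openin (top_of_set M) U" "f ` closure U \<subseteq> U"
    and split: "\<forall>y\<in>U. subspace (Es y) \<and> subspace (Fc y) \<and> Es y \<inter> Fc y = {0} \<and>
                  {a + b | a b. a \<in> Es y \<and> b \<in> Fc y} = tangent_space M y"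
      "continuous_subspace_field U Es" "continuous_subspace_field U Fc"
    and lam: "0 < lam" "lam < 1"
    and Es_inv: "\<forall>y\<in>U. f' y ` Es y = Es (f y)"
    and Es_contr: "\<forall>y\<in>U. \<forall>n. \<forall>v\<in>Es y. norm (iter_deriv f f' n y v) \<le> lam ^ n * norm v"
    and dimF: "\<forall>y\<in>U. dim (Fc y) = d"
    and cone: "\<forall>y\<in>U. C y \<subseteq> tangent_space M y \<and> cone_of_dim (C y) d"
    and cone_inv: "\<forall>y\<in>U. f' y ` C y \<subseteq> C (f y)"
    and dom: "\<forall>y\<in>U. \<forall>v\<in>Es y. \<forall>u\<in>C y.
                norm (f' y v) * norm u \<le> lam * norm v * norm (f' y u)"
    and x: "x \<in> U"
    and F: "subspace F1" "subspace F2" "dim F1 = d" "dim F2 = d"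
      "F1 \<subseteq> C x" "F2 \<subseteq> C x"
  shows "\<exists>\<kappa>. 0 < \<kappa> \<and> \<kappa> < 1 \<and>
     (\<forall>n\<ge>1. \<forall>i. 1 \<le> i \<and> i \<le> n \<longrightarrow>
        theta (Es ((f ^^ i) x)) (iter_deriv f f' i x ` F1) (iter_deriv f f' i x ` F2)
          \<le> \<kappa> ^ i * theta (Es x) F1 F2)"
proof -
  have UM: "U \<subseteq> M" using U(1) by (rule openin_imp_subset)
  have lin: "linear (f' y)" if "y \<in> U" for y
    using f_C1 UM that unfolding C1_map_on_def by (meson has_derivative_linear subsetD)
  have nonzero: "u = 0" if y: "y \<in> U" and u: "u \<in> C y" "f' y u = 0" for y u
  proof -
    have "subspace (tangent_space M y)" using split(1) subspace_sums[of "Es y" "Fc y"] y by simp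
    then have "u \<in> tangent_space M y" "0 \<in> tangent_space M y" using cone y u subspace_0 by blast+
    moreover have "inj_on (f' y) (tangent_space M y)" using f_nonsing UM y by blast
    ultimately show ?thesis using u(2) linear_0[OF lin[OF y]] by (metis inj_onD)
  qed
  interpret dominated_cone_field U f f' Es C lam
  proof (rule dominated_cone_field.intro)
    show "f y \<in> U" if "y \<in> U" for y using U(2) closure_subset that by blast
    show "subspace (Es y)" if "y \<in> U" for y using split(1) that by blast
    show "f' y ` Es y \<subseteq> Es (f y)" if "y \<in> U" for y using Es_inv that by blast
    show "f' y ` C y \<subseteq> C (f y)" if "y \<in> U" for y using cone_inv that by blast
  qed (use lin nonzero dom lam in auto)
  have Fc: "subspace (Fc x)" "Es x \<inter> Fc x \<subseteq> {0}" "dim (Fc x) = d"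
    and C: "C x \<subseteq> {a + b | a b. a \<in> Es x \<and> b \<in> Fc x}"
    using split(1) cone dimF x by auto
  have "graph_pair x F1 F2"
    using F Fc(3) by (intro graph_pair_of_complement[OF x Fc(1,2) C]) simp_all
  then show ?thesis using theta_iter_deriv_le[OF x] lam by (intro exI[of _ lam]) auto
qed

end
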